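(* If $\lambda$ is weakly compact, then $\lambda$ satisfies the strong system property.
   Context: Let $\lambda$ be an infinite regular cardinal. A relation $R$ is tree-like if $a<_R c$ and $b<_R c$ imply $a,b$ are $R$-comparable ($a=b$, $a<_Rb$ or $b<_Ra$). A $\lambda$-system is $S=\langle\{\{\alpha\}\times\kappa_\alpha\mid\alpha\in I\},\mathcal{R}\rangle$ with $I\subseteq\lambda$ unbounded, $0<\kappa_\alpha<\lambda$, levels $S_\alpha=\{\alpha\}\times\kappa_\alpha$ (and $S$ also denotes their union), $\mathcal{R}$ a set of binary transitive tree-like relations on $S$ with $|\mathcal{R}|<\lambda$, such that $(\alpha_0,\beta_0)<_R(\alpha_1,\beta_1)$ implies $\alpha_0<\alpha_1$, and for all $\alpha_0<\alpha_1$ in $I$ some elements of $S_{\alpha_0}$, $S_{\alpha_1}$ are related by some $R\in\mathcal{R}$. It is strong if for all $\alpha_0<\alpha_1$ in $I$ and every $\beta_1<\kappa_{\alpha_1}$ there are $\beta_0<\kappa_{\alpha_0}$ and $R\in\mathcal{R}$ with $(\alpha_0,\beta_0)<_R(\alpha_1,\beta_1)$. $\langle I\times\kappa,\mathcal{R}\rangle$ denotes a system with all $\kappa_\alpha=\kappa$. A branch through $R$ is a set of pairwise $R$-comparable elements; it is cofinal if it meets $S_\alpha$ for unboundedly many $\alpha\in I$. $\lambda$ satisfies the strong system property if every strong $\lambda$-system $S=\langle I\times\kappa,\mathcal{R}\rangle$ with $|\mathcal{R}|^+<\lambda$ has a cofinal branch. *)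

theory Defs
  imports Main
begin

unbundle cardinal_syntax

text \<open>Cardinals are represented by cardinal orders (well-orders of ordinals
below the cardinal), as in BNF_Cardinal_Order_Relation.  A cardinal lambda is a
relation r with Card_order r; the ordinals below lambda are the elements of
Field r, ordered by r (reflexive well-order).\<close>

definition weakly_compact :: "'a rel \<Rightarrow> bool" where
  "weakly_compact r \<longleftrightarrow>
     Card_order r \<and> natLeq <o r \<and>
     (\<forall>f :: 'a set \<Rightarrow> bool. \<exists>H. H \<subseteq> Field r \<and> |H| =o r \<and>
        (\<exists>c. \<forall>x\<in>H. \<forall>y\<in>H. x \<noteq> y \<longrightarrow> f {x, y} = c))"

definition tree_like :: "'b rel \<Rightarrow> bool" where
  "tree_like R \<longleftrightarrow> (\<forall>a b c. (a, c) \<in> R \<and> (b, c) \<in> R \<longrightarrow> a = b \<or> (a, b) \<in> R \<or> (b, a) \<in> R)"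

definition oless :: "'a rel \<Rightarrow> 'a \<Rightarrow> 'a \<Rightarrow> bool" where
  "oless r a b \<longleftrightarrow> (a, b) \<in> r \<and> a \<noteq> b"

text \<open>The strong lambda-system  \<langle>I \<times> kappa, RR\<rangle>  where kappa is an ordinal
(an element of Field r, i.e. kappa < lambda) which is a nonzero cardinal; the
ordinals below kappa are underS r k.\<close>
definition strong_system :: "'a rel \<Rightarrow> 'a set \<Rightarrow> 'a \<Rightarrow> (('a \<times> 'a) rel) set \<Rightarrow> bool" where
  "strong_system r I k RR \<longleftrightarrow>
     I \<subseteq> Field r \<and> (\<forall>\<gamma>\<in>Field r. \<exists>\<alpha>\<in>I. (\<gamma>, \<alpha>) \<in> r) \<and>
     k \<in> Field r \<and> underS r k \<noteq> {} \<and> Card_order (Restr r (underS r k)) \<and>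
     |RR| <o r \<and>
     (\<forall>R\<in>RR. R \<subseteq> (I \<times> underS r k) \<times> (I \<times> underS r k) \<and> trans R \<and> tree_like R \<and>
        (\<forall>x y. (x, y) \<in> R \<longrightarrow> oless r (fst x) (fst y))) \<and>
     (\<forall>\<alpha>0\<in>I. \<forall>\<alpha>1\<in>I. oless r \<alpha>0 \<alpha>1 \<longrightarrow>
        (\<exists>\<beta>0\<in>underS r k. \<exists>\<beta>1\<in>underS r k. \<exists>R\<in>RR. ((\<alpha>0, \<beta>0), (\<alpha>1, \<beta>1)) \<in> R)) \<and>
     (\<forall>\<alpha>0\<in>I. \<forall>\<alpha>1\<in>I. oless r \<alpha>0 \<alpha>1 \<longrightarrow> (\<forall>\<beta>1\<in>underS r k.
        (\<exists>\<beta>0\<in>underS r k. \<exists>R\<in>RR. ((\<alpha>0, \<beta>0), (\<alpha>1, \<beta>1)) \<in> R)))"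

definition cofinal_branch :: "'a rel \<Rightarrow> 'a set \<Rightarrow> 'a \<Rightarrow> ('a \<times> 'a) rel \<Rightarrow> ('a \<times> 'a) set \<Rightarrow> bool" where
  "cofinal_branch r I k R b \<longleftrightarrow>
     b \<subseteq> I \<times> underS r k \<and>
     (\<forall>x\<in>b. \<forall>y\<in>b. x = y \<or> (x, y) \<in> R \<or> (y, x) \<in> R) \<and>
     (\<forall>\<gamma>\<in>Field r. \<exists>x\<in>b. (\<gamma>, fst x) \<in> r)"

definition strong_system_property :: "'a rel \<Rightarrow> bool" where
  "strong_system_property r \<longleftrightarrow>
     (\<forall>I k (RR :: (('a \<times> 'a) rel) set).
        strong_system r I k RR \<and> cardSuc |RR| <o r \<longrightarrow>
        (\<exists>R\<in>RR. \<exists>b. cofinal_branch r I k R b))"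

end

theory Submission
  imports Defs
begin

unbundle cardinal_syntax

text \<open>
  Fix a node \<open>(\<beta>, k0)\<close> on every level \<open>\<beta>\<close>. Strongness gives, for \<open>\<gamma> < \<beta>\<close> in \<open>I\<close>, a pair
  \<open>w \<beta> \<gamma> = (R, b)\<close> with \<open>(\<gamma>, b) <\<^sub>R (\<beta>, k0)\<close>; the pairs range over a set of size \<open>< \<lambda>\<close>.
  Well-order the pairs and colour \<open>{\<alpha> < \<beta>}\<close> by whether \<open>w \<alpha>\<close> precedes \<open>w \<beta>\<close> lexicographically.
  On a homogeneous set \<open>H\<close> of size \<open>\<lambda>\<close> the coordinates are monotone wherever the earlier ones
  agree, so by induction on \<open>\<gamma>\<close>, regularity and a pigeonhole argument, each coordinate
  \<open>\<beta> \<mapsto> w \<beta> \<gamma>\<close> is eventually constant along \<open>H\<close>, say \<open>(R\<^sub>\<gamma>, b\<^sub>\<gamma>)\<close>. Pigeonhole again fixes one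
  \<open>R\<close> for cofinally many \<open>\<gamma>\<close>; any two of the nodes \<open>(\<gamma>, b\<^sub>\<gamma>)\<close> lie \<open>R\<close>-below a common
  \<open>(\<beta>, k0)\<close>, hence are comparable since \<open>R\<close> is tree-like.
\<close>

lemma Times_ordLess_regularCard:
  assumes "regularCard r" and "Cinfinite r" and "|A| <o r" and "|B| <o r"
  shows "|A \<times> B| <o r"
proof -
  have "|{a} \<times> B| <o r" if "a \<in> A" for a
  proof -
    have "{a} \<times> B = Pair a ` B" by auto
    thus ?thesis using ordLeq_ordLess_trans[OF card_of_image assms(4)] by simp
  qed
  hence "|\<Union>a\<in>A. {a} \<times> B| <o r"
    using card_of_UNION_ordLess_infinite_Field_regularCard[OF assms(1-3), of "\<lambda>a. {a} \<times> B"]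
    by blast
  thus ?thesis by (simp add: Sigma_def)
qed

lemma cofinal_iff_oless:
  "cofinal A r \<longleftrightarrow> (\<forall>a\<in>Field r. \<exists>b\<in>A. oless r a b)"
  unfolding cofinal_def oless_def by blast

lemma weakly_compact_homogeneous:
  fixes P :: "'a \<Rightarrow> 'a \<Rightarrow> bool"
  assumes wc: "weakly_compact r" and I: "I \<subseteq> Field r" "|I| =o r"
  shows "\<exists>H\<subseteq>I. |H| =o r \<and> (\<exists>c. \<forall>\<alpha>\<in>H. \<forall>\<beta>\<in>H. oless r \<alpha> \<beta> \<longrightarrow> P \<alpha> \<beta> = c)"
proof -
  have "Card_order r" using wc unfolding weakly_compact_def by blast
  hence "antisym r"
    using card_order_on_well_order_on
    unfolding well_order_on_def linear_order_on_def partial_order_on_def by blast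
  define colour where "colour S \<longleftrightarrow> (\<exists>\<alpha> \<beta>. S = {\<alpha>, \<beta>} \<and> oless r \<alpha> \<beta> \<and> P \<alpha> \<beta>)" for S
  have colour_pair: "colour {\<alpha>, \<beta>} = P \<alpha> \<beta>" if \<alpha>\<beta>: "oless r \<alpha> \<beta>" for \<alpha> \<beta>
  proof
    assume "colour {\<alpha>, \<beta>}"
    then obtain \<alpha>' \<beta>' where \<alpha>'\<beta>': "{\<alpha>, \<beta>} = {\<alpha>', \<beta>'}" "oless r \<alpha>' \<beta>'" "P \<alpha>' \<beta>'"
      unfolding colour_def by blast
    have "\<not> (\<alpha>' = \<beta> \<and> \<beta>' = \<alpha>)"
      using \<alpha>\<beta> \<alpha>'\<beta>'(2) antisymD[OF \<open>antisym r\<close>] unfolding oless_def by blast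
    hence "\<alpha>' = \<alpha> \<and> \<beta>' = \<beta>" using \<alpha>'\<beta>'(1) unfolding doubleton_eq_iff by blast
    thus "P \<alpha> \<beta>" using \<alpha>'\<beta>'(3) by simp
  next
    assume "P \<alpha> \<beta>"
    thus "colour {\<alpha>, \<beta>}" using \<alpha>\<beta> unfolding colour_def by blast
  qed
  \<comment> \<open>Weak compactness yields a homogeneous set inside \<open>Field r\<close>; a bijection onto \<open>I\<close> moves it into \<open>I\<close>.\<close>
  have "|Field r| =o |I|"
    using card_of_Field_ordIso[OF \<open>Card_order r\<close>] I(2) ordIso_symmetric ordIso_transitive by blast
  then obtain h where h: "bij_betw h (Field r) I" using card_of_ordIso by blast
  have "\<forall>f :: 'a set \<Rightarrow> bool. \<exists>H. H \<subseteq> Field r \<and> |H| =o r \<and>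
      (\<exists>c. \<forall>x\<in>H. \<forall>y\<in>H. x \<noteq> y \<longrightarrow> f {x, y} = c)"
    using wc unfolding weakly_compact_def by (elim conjE)
  from spec[OF this, of "\<lambda>S. colour (h ` S)"] obtain H0 c where H0: "H0 \<subseteq> Field r" "|H0| =o r"
    and hom0: "\<forall>x\<in>H0. \<forall>y\<in>H0. x \<noteq> y \<longrightarrow> colour (h ` {x, y}) = c"
    by (elim exE conjE)
  have "inj_on h H0" using h H0(1) inj_on_subset unfolding bij_betw_def by blast
  hence "|H0| =o |h ` H0|" using card_of_ordIso bij_betw_imageI by blast
  show ?thesis
  proof (intro exI conjI)
    show "h ` H0 \<subseteq> I" using h H0(1) unfolding bij_betw_def by blast
    show "|h ` H0| =o r" using \<open>|H0| =o |h ` H0|\<close> H0(2) ordIso_symmetric ordIso_transitive by blast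
    show "\<forall>\<alpha>\<in>h ` H0. \<forall>\<beta>\<in>h ` H0. oless r \<alpha> \<beta> \<longrightarrow> P \<alpha> \<beta> = c"
    proof (intro ballI impI)
      fix \<alpha> \<beta> assume "\<alpha> \<in> h ` H0" and "\<beta> \<in> h ` H0" and \<alpha>\<beta>: "oless r \<alpha> \<beta>"
      then obtain x y where xy: "x \<in> H0" "y \<in> H0" "\<alpha> = h x" "\<beta> = h y" by blast
      moreover have "x \<noteq> y" using xy \<alpha>\<beta> unfolding oless_def by blast
      ultimately show "P \<alpha> \<beta> = c" using hom0 colour_pair[OF \<alpha>\<beta>] by auto
    qed
  qed
qed

lemma strong_systemD:
  assumes "strong_system r I k RR"
  shows "I \<subseteq> Field r" and "\<forall>\<gamma>\<in>Field r. \<exists>\<alpha>\<in>I. (\<gamma>, \<alpha>) \<in> r" and "k \<in> Field r"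
    and "underS r k \<noteq> {}" and "|RR| <o r" and "\<forall>R\<in>RR. tree_like R"
    and "\<forall>\<alpha>0\<in>I. \<forall>\<alpha>1\<in>I. oless r \<alpha>0 \<alpha>1 \<longrightarrow>
      (\<forall>\<beta>1\<in>underS r k. \<exists>\<beta>0\<in>underS r k. \<exists>R\<in>RR. ((\<alpha>0, \<beta>0), (\<alpha>1, \<beta>1)) \<in> R)"
  using assms unfolding strong_system_def by simp_all

lemma strong_system_witness:
  assumes "strong_system r I k RR" and "k0 \<in> underS r k"
  obtains w where "\<And>\<gamma> \<beta>. \<gamma> \<in> I \<Longrightarrow> \<beta> \<in> I \<Longrightarrow> oless r \<gamma> \<beta> \<Longrightarrow>
    w \<beta> \<gamma> \<in> RR \<times> underS r k \<and> ((\<gamma>, snd (w \<beta> \<gamma>)), (\<beta>, k0)) \<in> fst (w \<beta> \<gamma>)"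
proof -
  have "\<forall>\<beta> \<gamma>. \<exists>p. \<gamma> \<in> I \<longrightarrow> \<beta> \<in> I \<longrightarrow> oless r \<gamma> \<beta> \<longrightarrow>
      p \<in> RR \<times> underS r k \<and> ((\<gamma>, snd p), (\<beta>, k0)) \<in> fst p"
    using strong_systemD(7)[OF assms(1)] assms(2) by fastforce
  thus thesis using that by metis
qed

definition lex_less :: "'a rel \<Rightarrow> 'a set \<Rightarrow> 'v rel \<Rightarrow> ('a \<Rightarrow> 'v) \<Rightarrow> ('a \<Rightarrow> 'v) \<Rightarrow> bool" where
  "lex_less r I W f g \<longleftrightarrow>
     (\<exists>\<delta>\<in>I. f \<delta> \<noteq> g \<delta> \<and> (\<forall>\<delta>'\<in>I. oless r \<delta>' \<delta> \<longrightarrow> f \<delta>' = g \<delta>') \<and> (f \<delta>, g \<delta>) \<in> W)"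

locale regular_cardinal =
  fixes r :: "'a rel"
  assumes Card_order: "Card_order r" and cinfinite: "cinfinite r" and regular: "regularCard r"
begin

lemma wo_rel: "wo_rel r"
  using Card_order card_order_on_well_order_on unfolding wo_rel_def by blast

lemma le_total: "a \<in> Field r \<Longrightarrow> b \<in> Field r \<Longrightarrow> (a, b) \<in> r \<or> (b, a) \<in> r"
  using wo_rel.TOTALS[OF wo_rel] by blast

lemma le_oless_trans: "(a, b) \<in> r \<Longrightarrow> oless r b c \<Longrightarrow> oless r a c"
  using wo_rel.TRANS[OF wo_rel] wo_rel.ANTISYM[OF wo_rel]
  unfolding oless_def trans_def antisym_def by blast

lemma oless_le_trans: "oless r a b \<Longrightarrow> (b, c) \<in> r \<Longrightarrow> oless r a c"
  using wo_rel.TRANS[OF wo_rel] wo_rel.ANTISYM[OF wo_rel]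
  unfolding oless_def trans_def antisym_def by blast

lemma le_if_not_oless: "a \<in> Field r \<Longrightarrow> b \<in> Field r \<Longrightarrow> \<not> oless r a b \<Longrightarrow> (b, a) \<in> r"
  using le_total unfolding oless_def by blast

lemma oless_Field: "oless r a b \<Longrightarrow> a \<in> Field r \<and> b \<in> Field r"
  unfolding oless_def by (auto intro: FieldI1 FieldI2)

lemma le_trans: "(a, b) \<in> r \<Longrightarrow> (b, c) \<in> r \<Longrightarrow> (a, c) \<in> r"
  using wo_rel.TRANS[OF wo_rel] unfolding trans_def by blast

lemma upper_bound2: "a \<in> Field r \<Longrightarrow> b \<in> Field r \<Longrightarrow> \<exists>m\<in>Field r. (a, m) \<in> r \<and> (b, m) \<in> r"
  using le_total by blast

lemma bounded_if_ordLess: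
  assumes "K \<subseteq> Field r" and "|K| <o r"
  shows "\<exists>a\<in>Field r. \<forall>b\<in>K. (b, a) \<in> r"
proof -
  have "\<not> cofinal K r"
    using regular assms not_ordLess_ordIso unfolding regularCard_def by blast
  then obtain a where "a \<in> Field r" "\<forall>b\<in>K. \<not> oless r a b"
    unfolding cofinal_iff_oless by blast
  thus ?thesis using assms(1) le_if_not_oless by blast
qed

lemma bounded_family_underS:
  assumes "\<gamma> \<in> Field r" and "D \<subseteq> underS r \<gamma>" and "t ` D \<subseteq> Field r"
  shows "\<exists>\<theta>\<in>Field r. (\<gamma>, \<theta>) \<in> r \<and> (\<forall>\<delta>\<in>D. (t \<delta>, \<theta>) \<in> r)"
proof -
  have "|t ` D| <o r"
    using ordLeq_ordLess_trans[OF ordLeq_transitive[OF card_of_image card_of_mono1[OF assms(2)]]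
        card_of_underS[OF Card_order assms(1)]] .
  then obtain a where a: "a \<in> Field r" "\<forall>\<delta>\<in>D. (t \<delta>, a) \<in> r"
    using bounded_if_ordLess[OF assms(3)] by blast
  obtain \<theta> where \<theta>: "\<theta> \<in> Field r" "(a, \<theta>) \<in> r" "(\<gamma>, \<theta>) \<in> r"
    using upper_bound2[OF a(1) assms(1)] by blast
  have "\<forall>\<delta>\<in>D. (t \<delta>, \<theta>) \<in> r" using le_trans[OF _ \<theta>(2)] a(2) by blast
  thus ?thesis using \<theta>(1,3) by blast
qed

lemma greater_exists:
  assumes a: "a \<in> Field r"
  shows "\<exists>b. oless r a b"
proof (rule ccontr)
  assume "\<nexists>b. oless r a b"
  hence "Field r \<subseteq> {a} \<union> underS r a"
    using le_if_not_oless a unfolding underS_def by blast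
  moreover have "|{a}| <o r"
    using finite_ordLess_infinite[OF card_of_Well_order wo_rel[unfolded wo_rel_def], of "{a}"]
      cinfinite
    unfolding cinfinite_def by (simp add: Field_card_of)
  hence "|{a} \<union> underS r a| <o r"
    using card_of_Un_ordLess_infinite_Field[OF _ Card_order _ card_of_underS[OF Card_order a]]
      cinfinite
    unfolding cinfinite_def by blast
  ultimately have "|Field r| <o r"
    using ordLeq_ordLess_trans[OF card_of_mono1] by blast
  thus False using not_ordLess_ordIso card_of_Field_ordIso[OF Card_order] by blast
qed

lemma cofinal_if_ordIso:
  assumes "H \<subseteq> Field r" and "|H| =o r"
  shows "cofinal H r"
  unfolding cofinal_iff_oless
proof
  fix \<xi> assume "\<xi> \<in> Field r"
  then obtain \<xi>' where \<xi>': "oless r \<xi> \<xi>'" using greater_exists by blast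
  show "\<exists>h\<in>H. oless r \<xi> h"
  proof (rule ccontr)
    assume "\<not> (\<exists>h\<in>H. oless r \<xi> h)"
    hence "oless r h \<xi>'" if "h \<in> H" for h
      using le_oless_trans[OF le_if_not_oless \<xi>'] that assms(1) oless_Field[OF \<xi>'] by blast
    hence "H \<subseteq> underS r \<xi>'" unfolding underS_def oless_def by blast
    hence "|H| <o r"
      using ordLeq_ordLess_trans[OF card_of_mono1 card_of_underS[OF Card_order]] oless_Field[OF \<xi>']
      by blast
    thus False using assms(2) not_ordLess_ordIso by blast
  qed
qed

lemma cofinal_if_weakly_cofinal:
  assumes "\<forall>\<gamma>\<in>Field r. \<exists>\<alpha>\<in>I. (\<gamma>, \<alpha>) \<in> r"
  shows "cofinal I r"
  unfolding cofinal_iff_oless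
proof
  fix \<xi> assume "\<xi> \<in> Field r"
  then obtain \<xi>' where "oless r \<xi> \<xi>'" using greater_exists by blast
  moreover then obtain \<alpha> where "\<alpha> \<in> I" "(\<xi>', \<alpha>) \<in> r" using assms oless_Field by blast
  ultimately show "\<exists>\<alpha>\<in>I. oless r \<xi> \<alpha>" using oless_le_trans by blast
qed

lemma cofinal_tail:
  assumes "cofinal H r" and "\<theta> \<in> Field r"
  shows "cofinal {\<beta>\<in>H. oless r \<theta> \<beta>} r"
  unfolding cofinal_iff_oless
proof
  fix \<xi> assume "\<xi> \<in> Field r"
  then obtain m where "m \<in> Field r" "(\<xi>, m) \<in> r" "(\<theta>, m) \<in> r"
    using upper_bound2 assms(2) by blast
  moreover then obtain \<beta> where "\<beta> \<in> H" "oless r m \<beta>"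
    using assms(1) unfolding cofinal_iff_oless by blast
  ultimately show "\<exists>\<beta>\<in>{\<beta>\<in>H. oless r \<theta> \<beta>}. oless r \<xi> \<beta>" using le_oless_trans by blast
qed

lemma cofinal_pigeonhole:
  assumes X: "cofinal X r" and g: "g ` X \<subseteq> V" and V: "|V| <o r"
  shows "\<exists>v\<in>V. cofinal {x\<in>X. g x = v} r"
proof (rule ccontr)
  assume "\<not> ?thesis"
  hence "\<forall>v\<in>V. \<exists>\<xi>\<in>Field r. \<forall>x\<in>X. g x = v \<longrightarrow> \<not> oless r \<xi> x"
    unfolding cofinal_iff_oless by blast
  then obtain bd where bd: "\<forall>v\<in>V. bd v \<in> Field r \<and> (\<forall>x\<in>X. g x = v \<longrightarrow> \<not> oless r (bd v) x)"
    by metis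
  have "|bd ` V| <o r" using card_of_image V ordLeq_ordLess_trans by blast
  then obtain a where a: "a \<in> Field r" "\<forall>v\<in>V. (bd v, a) \<in> r"
    using bounded_if_ordLess[of "bd ` V"] bd by blast
  then obtain x where x: "x \<in> X" "oless r a x" using X unfolding cofinal_iff_oless by blast
  hence "g x \<in> V" using g by blast
  hence "oless r (bd (g x)) x" using a x le_oless_trans by blast
  thus False using bd x \<open>g x \<in> V\<close> by blast
qed

lemma lex_less_first_difference:
  assumes "I \<subseteq> Field r" and "\<gamma> \<in> I" and "f \<gamma> \<noteq> g \<gamma>" and "\<forall>\<delta>\<in>I. oless r \<delta> \<gamma> \<longrightarrow> f \<delta> = g \<delta>"
  shows "lex_less r I W f g \<longleftrightarrow> (f \<gamma>, g \<gamma>) \<in> W"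
proof
  assume "lex_less r I W f g"
  then obtain \<delta> where \<delta>: "\<delta> \<in> I" "f \<delta> \<noteq> g \<delta>" "\<forall>\<delta>'\<in>I. oless r \<delta>' \<delta> \<longrightarrow> f \<delta>' = g \<delta>'"
    "(f \<delta>, g \<delta>) \<in> W"
    unfolding lex_less_def by blast
  have "\<not> oless r \<delta> \<gamma>" "\<not> oless r \<gamma> \<delta>" using \<delta> assms by blast+
  hence "\<delta> = \<gamma>"
    using le_if_not_oless wo_rel.ANTISYM[OF wo_rel] assms(1,2) \<delta>(1) unfolding antisym_def by blast
  thus "(f \<gamma>, g \<gamma>) \<in> W" using \<delta>(4) by simp
next
  assume "(f \<gamma>, g \<gamma>) \<in> W"
  thus "lex_less r I W f g" using assms(2-4) unfolding lex_less_def by blast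
qed

lemma monotone_if_lex_less_eq:
  assumes "total W" and "I \<subseteq> Field r" and "\<gamma> \<in> I" and "\<forall>\<delta>\<in>I. oless r \<delta> \<gamma> \<longrightarrow> f \<delta> = g \<delta>"
  shows "(f \<gamma>, g \<gamma>) \<in> (if lex_less r I W f g then W else W\<inverse>) \<or> f \<gamma> = g \<gamma>"
  using lex_less_first_difference[OF assms(2,3) _ assms(4), of W] assms(1)
  unfolding total_on_def by auto

lemma eventually_constant_if_monotone:
  assumes X: "cofinal X r" and g: "g ` X \<subseteq> V" and V: "|V| <o r" and Ord: "antisym Ord"
    and mono: "\<And>\<alpha> \<beta>. \<alpha> \<in> X \<Longrightarrow> \<beta> \<in> X \<Longrightarrow> oless r \<alpha> \<beta> \<Longrightarrow> (g \<alpha>, g \<beta>) \<in> Ord \<or> g \<alpha> = g \<beta>"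
  shows "\<exists>v\<in>V. \<exists>\<theta>\<in>Field r. \<forall>\<beta>\<in>X. oless r \<theta> \<beta> \<longrightarrow> g \<beta> = v"
proof -
  obtain v where v: "v \<in> V" "cofinal {x\<in>X. g x = v} r"
    using cofinal_pigeonhole[OF X g V] by blast
  obtain a where "a \<in> Field r" using cinfinite unfolding cinfinite_def by fastforce
  then obtain \<alpha>0 where \<alpha>0: "\<alpha>0 \<in> X" "g \<alpha>0 = v" "oless r a \<alpha>0"
    using v(2) unfolding cofinal_iff_oless by blast
  have "g \<beta> = v" if \<beta>: "\<beta> \<in> X" "oless r \<alpha>0 \<beta>" for \<beta>
  proof -
    obtain \<alpha>1 where \<alpha>1: "\<alpha>1 \<in> X" "g \<alpha>1 = v" "oless r \<beta> \<alpha>1"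
      using v(2) oless_Field[OF \<beta>(2)] unfolding cofinal_iff_oless by blast
    have "(v, g \<beta>) \<in> Ord \<or> v = g \<beta>" using mono[OF \<alpha>0(1) \<beta>] \<alpha>0(2) by simp
    moreover have "(g \<beta>, v) \<in> Ord \<or> g \<beta> = v" using mono[OF \<beta>(1) \<alpha>1(1,3)] \<alpha>1(2) by simp
    ultimately show ?thesis using antisymD[OF Ord] by blast
  qed
  moreover have "\<alpha>0 \<in> Field r" using oless_Field[OF \<alpha>0(3)] by blast
  ultimately show ?thesis using v(1) by (intro bexI[of _ v] bexI[of _ \<alpha>0]) auto
qed

lemma eventually_constant_coordinates:
  fixes w :: "'a \<Rightarrow> 'a \<Rightarrow> 'v"
  assumes I: "I \<subseteq> Field r" and H: "cofinal H r" and V: "|V| <o r" and Ord: "antisym Ord"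
    and in_V: "\<And>\<gamma> \<beta>. \<gamma> \<in> I \<Longrightarrow> \<beta> \<in> H \<Longrightarrow> oless r \<gamma> \<beta> \<Longrightarrow> w \<beta> \<gamma> \<in> V"
    and mono: "\<And>\<alpha> \<beta> \<gamma>. \<alpha> \<in> H \<Longrightarrow> \<beta> \<in> H \<Longrightarrow> oless r \<alpha> \<beta> \<Longrightarrow> \<gamma> \<in> I \<Longrightarrow>
        \<forall>\<delta>\<in>I. oless r \<delta> \<gamma> \<longrightarrow> w \<alpha> \<delta> = w \<beta> \<delta> \<Longrightarrow> (w \<alpha> \<gamma>, w \<beta> \<gamma>) \<in> Ord \<or> w \<alpha> \<gamma> = w \<beta> \<gamma>"
  shows "\<forall>\<gamma>\<in>I. \<exists>v\<in>V. \<exists>\<theta>\<in>Field r. \<forall>\<beta>\<in>H. oless r \<theta> \<beta> \<longrightarrow> oless r \<gamma> \<beta> \<and> w \<beta> \<gamma> = v"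
proof -
  have "\<gamma> \<in> I \<longrightarrow> (\<exists>v\<in>V. \<exists>\<theta>\<in>Field r. \<forall>\<beta>\<in>H. oless r \<theta> \<beta> \<longrightarrow> oless r \<gamma> \<beta> \<and> w \<beta> \<gamma> = v)"
    for \<gamma>
  proof (induction \<gamma> rule: wo_rel.well_order_induct[OF wo_rel])
    case (1 \<gamma>)
    show ?case
    proof
      assume \<gamma>: "\<gamma> \<in> I"
      define D where "D = {\<delta>\<in>I. oless r \<delta> \<gamma>}"
      have "\<exists>\<theta>\<in>Field r. \<exists>v. \<forall>\<beta>\<in>H. oless r \<theta> \<beta> \<longrightarrow> w \<beta> \<delta> = v" if "\<delta> \<in> D" for \<delta>
      proof -
        have "\<delta> \<noteq> \<gamma> \<and> (\<delta>, \<gamma>) \<in> r" "\<delta> \<in> I" using that unfolding D_def oless_def by blast+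
        then obtain v \<theta> where "\<theta> \<in> Field r" "\<forall>\<beta>\<in>H. oless r \<theta> \<beta> \<longrightarrow> oless r \<delta> \<beta> \<and> w \<beta> \<delta> = v"
          using 1 by blast
        thus ?thesis by blast
      qed
      then obtain th where th: "\<forall>\<delta>\<in>D. th \<delta> \<in> Field r \<and>
          (\<exists>v. \<forall>\<beta>\<in>H. oless r (th \<delta>) \<beta> \<longrightarrow> w \<beta> \<delta> = v)"
        using bchoice[of D "\<lambda>\<delta> \<theta>. \<theta> \<in> Field r \<and> (\<exists>v. \<forall>\<beta>\<in>H. oless r \<theta> \<beta> \<longrightarrow> w \<beta> \<delta> = v)"]
        by blast
      have D: "D \<subseteq> underS r \<gamma>" unfolding D_def underS_def oless_def by blast
      have th_Field: "th ` D \<subseteq> Field r" using th by blast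
      obtain \<theta> where \<theta>: "\<theta> \<in> Field r" "(\<gamma>, \<theta>) \<in> r" "\<And>\<delta>. \<delta> \<in> D \<Longrightarrow> (th \<delta>, \<theta>) \<in> r"
        using bounded_family_underS[OF subsetD[OF I \<gamma>] D th_Field] by blast
      define X where "X = {\<beta>\<in>H. oless r \<theta> \<beta>}"
      have X: "cofinal X r" using cofinal_tail[OF H \<theta>(1)] unfolding X_def .
      have above: "oless r \<gamma> \<beta>" if "\<beta> \<in> X" for \<beta>
        using le_oless_trans[OF \<theta>(2)] that unfolding X_def by blast
      have agree: "\<forall>\<delta>\<in>I. oless r \<delta> \<gamma> \<longrightarrow> w \<alpha> \<delta> = w \<beta> \<delta>" if "\<alpha> \<in> X" "\<beta> \<in> X" for \<alpha> \<beta>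
      proof (intro ballI impI)
        fix \<delta> assume "\<delta> \<in> I" "oless r \<delta> \<gamma>"
        hence \<delta>: "\<delta> \<in> D" unfolding D_def by blast
        then obtain v where "\<forall>\<beta>\<in>H. oless r (th \<delta>) \<beta> \<longrightarrow> w \<beta> \<delta> = v" using th by blast
        moreover have "oless r (th \<delta>) \<alpha>" "oless r (th \<delta>) \<beta>"
          using le_oless_trans[OF \<theta>(3)[OF \<delta>]] that unfolding X_def by blast+
        ultimately show "w \<alpha> \<delta> = w \<beta> \<delta>" using that unfolding X_def by auto
      qed
      have X_V: "(\<lambda>\<beta>. w \<beta> \<gamma>) ` X \<subseteq> V" using in_V[OF \<gamma>] above unfolding X_def by blast
      have X_mono: "(w \<alpha> \<gamma>, w \<beta> \<gamma>) \<in> Ord \<or> w \<alpha> \<gamma> = w \<beta> \<gamma>"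
        if "\<alpha> \<in> X" and "\<beta> \<in> X" and "oless r \<alpha> \<beta>" for \<alpha> \<beta>
        using mono[OF _ _ that(3) \<gamma> agree[OF that(1,2)]] that(1,2) unfolding X_def by blast
      obtain v \<theta>' where v: "v \<in> V" "\<theta>' \<in> Field r"
        "\<And>\<beta>. \<beta> \<in> X \<Longrightarrow> oless r \<theta>' \<beta> \<Longrightarrow> w \<beta> \<gamma> = v"
        using eventually_constant_if_monotone[OF X X_V V Ord X_mono] by blast
      obtain m where m: "m \<in> Field r" "(\<theta>, m) \<in> r" "(\<theta>', m) \<in> r"
        using upper_bound2[OF \<theta>(1) v(2)] by blast
      have "oless r \<gamma> \<beta> \<and> w \<beta> \<gamma> = v" if "\<beta> \<in> H" and "oless r m \<beta>" for \<beta>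
      proof -
        have "\<beta> \<in> X" using le_oless_trans[OF m(2) that(2)] that(1) unfolding X_def by blast
        thus ?thesis using above v(3) le_oless_trans[OF m(3) that(2)] by blast
      qed
      thus "\<exists>v\<in>V. \<exists>\<theta>\<in>Field r. \<forall>\<beta>\<in>H. oless r \<theta> \<beta> \<longrightarrow> oless r \<gamma> \<beta> \<and> w \<beta> \<gamma> = v"
        using v(1) m(1) by blast
    qed
  qed
  thus ?thesis by blast
qed

lemma eventually_constant_if_lex_homogeneous:
  fixes w :: "'a \<Rightarrow> 'a \<Rightarrow> 'v"
  assumes I: "I \<subseteq> Field r" and H: "cofinal H r" and V: "|V| <o r"
    and W: "total W" "antisym W"
    and in_V: "\<And>\<gamma> \<beta>. \<gamma> \<in> I \<Longrightarrow> \<beta> \<in> H \<Longrightarrow> oless r \<gamma> \<beta> \<Longrightarrow> w \<beta> \<gamma> \<in> V"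
    and hom: "\<And>\<alpha> \<beta>. \<alpha> \<in> H \<Longrightarrow> \<beta> \<in> H \<Longrightarrow> oless r \<alpha> \<beta> \<Longrightarrow> lex_less r I W (w \<alpha>) (w \<beta>) = c"
  shows "\<forall>\<gamma>\<in>I. \<exists>v\<in>V. \<exists>\<theta>\<in>Field r. \<forall>\<beta>\<in>H. oless r \<theta> \<beta> \<longrightarrow> oless r \<gamma> \<beta> \<and> w \<beta> \<gamma> = v"
proof (rule eventually_constant_coordinates[OF I H V _ in_V])
  show "antisym (if c then W else W\<inverse>)" using W(2) by simp
  show "(w \<alpha> \<gamma>, w \<beta> \<gamma>) \<in> (if c then W else W\<inverse>) \<or> w \<alpha> \<gamma> = w \<beta> \<gamma>"
    if "\<alpha> \<in> H" "\<beta> \<in> H" "oless r \<alpha> \<beta>" "\<gamma> \<in> I" "\<forall>\<delta>\<in>I. oless r \<delta> \<gamma> \<longrightarrow> w \<alpha> \<delta> = w \<beta> \<delta>"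
    for \<alpha> \<beta> \<gamma>
    using monotone_if_lex_less_eq[OF W(1) I that(4,5)] hom[OF that(1-3)] by simp
qed

lemma cofinal_branch_if_eventually_below:
  assumes RR: "|RR| <o r" "\<forall>R\<in>RR. tree_like R" and I: "cofinal I r" and H: "cofinal H r"
    and below: "\<And>\<gamma>. \<gamma> \<in> I \<Longrightarrow> \<exists>R\<in>RR. \<exists>b\<in>underS r k. \<exists>\<theta>\<in>Field r.
      \<forall>\<beta>\<in>H. oless r \<theta> \<beta> \<longrightarrow> ((\<gamma>, b), t \<beta>) \<in> R"
  shows "\<exists>R\<in>RR. \<exists>B. cofinal_branch r I k R B"
proof -
  obtain Rf bf \<theta>f where f: "\<forall>\<gamma>\<in>I. Rf \<gamma> \<in> RR \<and> bf \<gamma> \<in> underS r k \<and> \<theta>f \<gamma> \<in> Field r \<and>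
      (\<forall>\<beta>\<in>H. oless r (\<theta>f \<gamma>) \<beta> \<longrightarrow> ((\<gamma>, bf \<gamma>), t \<beta>) \<in> Rf \<gamma>)"
    using below by metis
  obtain R where R: "R \<in> RR" "cofinal {\<gamma>\<in>I. Rf \<gamma> = R} r"
    using cofinal_pigeonhole[OF I, of Rf RR] f RR(1) by blast
  define \<Gamma> where "\<Gamma> = {\<gamma>\<in>I. Rf \<gamma> = R}"
  have "cofinal_branch r I k R ((\<lambda>\<gamma>. (\<gamma>, bf \<gamma>)) ` \<Gamma>)"
    unfolding cofinal_branch_def
  proof (intro conjI ballI)
    show "(\<lambda>\<gamma>. (\<gamma>, bf \<gamma>)) ` \<Gamma> \<subseteq> I \<times> underS r k" using f unfolding \<Gamma>_def by blast
  next
    fix x y assume "x \<in> (\<lambda>\<gamma>. (\<gamma>, bf \<gamma>)) ` \<Gamma>" "y \<in> (\<lambda>\<gamma>. (\<gamma>, bf \<gamma>)) ` \<Gamma>"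
    then obtain \<gamma> \<gamma>' where \<gamma>: "\<gamma> \<in> \<Gamma>" "\<gamma>' \<in> \<Gamma>" "x = (\<gamma>, bf \<gamma>)" "y = (\<gamma>', bf \<gamma>')" by blast
    obtain m where m: "m \<in> Field r" "(\<theta>f \<gamma>, m) \<in> r" "(\<theta>f \<gamma>', m) \<in> r"
      using upper_bound2 f \<gamma>(1,2) unfolding \<Gamma>_def by blast
    obtain \<beta> where "\<beta> \<in> H" "oless r m \<beta>" using H m(1) unfolding cofinal_iff_oless by blast
    hence "(x, t \<beta>) \<in> R" "(y, t \<beta>) \<in> R" using f \<gamma> m le_oless_trans unfolding \<Gamma>_def by blast+
    thus "x = y \<or> (x, y) \<in> R \<or> (y, x) \<in> R" using RR(2) R(1) unfolding tree_like_def by blast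
  next
    fix \<xi> assume "\<xi> \<in> Field r"
    then obtain \<gamma> where "\<gamma> \<in> \<Gamma>" "oless r \<xi> \<gamma>" using R(2) unfolding \<Gamma>_def cofinal_iff_oless by blast
    thus "\<exists>x\<in>(\<lambda>\<gamma>. (\<gamma>, bf \<gamma>)) ` \<Gamma>. (\<xi>, fst x) \<in> r" unfolding oless_def by force
  qed
  thus ?thesis using R(1) by blast
qed

lemma strong_system_cofinal_branch:
  assumes wc: "weakly_compact r" and S: "strong_system r I k RR"
  shows "\<exists>R\<in>RR. \<exists>B. cofinal_branch r I k R B"
proof -
  note I = strong_systemD(1)[OF S] cofinal_if_weakly_cofinal[OF strong_systemD(2)[OF S]]
  note k = strong_systemD(3,4)[OF S] and RR = strong_systemD(5,6)[OF S]
  obtain k0 where k0: "k0 \<in> underS r k" using k(2) by blast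
  define V where "V = RR \<times> underS r k"
  have V: "|V| <o r"
    unfolding V_def
    using Times_ordLess_regularCard[OF regular _ RR(1) card_of_underS[OF Card_order k(1)]]
      cinfinite Card_order by blast
  obtain w where w: "\<And>\<gamma> \<beta>. \<gamma> \<in> I \<Longrightarrow> \<beta> \<in> I \<Longrightarrow> oless r \<gamma> \<beta> \<Longrightarrow>
      w \<beta> \<gamma> \<in> V \<and> ((\<gamma>, snd (w \<beta> \<gamma>)), (\<beta>, k0)) \<in> fst (w \<beta> \<gamma>)"
    using strong_system_witness[OF S k0] unfolding V_def by blast
  obtain W :: "(('a \<times> 'a) rel \<times> 'a) rel" where W: "Well_order W" "Field W = UNIV"
    using well_ordering[where 'a = "('a \<times> 'a) rel \<times> 'a"] by (elim exE conjE)
  have I_card: "|I| =o r" using regular I unfolding regularCard_def by (elim allE impE) (rule conjI)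
  obtain H c where H: "H \<subseteq> I" "|H| =o r"
    and hom: "\<forall>\<alpha>\<in>H. \<forall>\<beta>\<in>H. oless r \<alpha> \<beta> \<longrightarrow> lex_less r I W (w \<alpha>) (w \<beta>) = c"
    using weakly_compact_homogeneous[OF wc I(1) I_card, of "\<lambda>\<alpha> \<beta>. lex_less r I W (w \<alpha>) (w \<beta>)"]
    by (elim exE conjE) (rule that)
  have H_cofinal: "cofinal H r" using cofinal_if_ordIso H I(1) by blast
  have W_total: "total W" and W_antisym: "antisym W"
    using W unfolding well_order_on_def linear_order_on_def partial_order_on_def by simp_all
  have eventual: "\<forall>\<gamma>\<in>I. \<exists>v\<in>V. \<exists>\<theta>\<in>Field r. \<forall>\<beta>\<in>H. oless r \<theta> \<beta> \<longrightarrow> oless r \<gamma> \<beta> \<and> w \<beta> \<gamma> = v"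
  proof (rule eventually_constant_if_lex_homogeneous[OF I(1) H_cofinal V W_total W_antisym])
    show "w \<beta> \<gamma> \<in> V" if "\<gamma> \<in> I" and "\<beta> \<in> H" and "oless r \<gamma> \<beta>" for \<gamma> \<beta>
      using w that H(1) by blast
    show "lex_less r I W (w \<alpha>) (w \<beta>) = c" if "\<alpha> \<in> H" and "\<beta> \<in> H" and "oless r \<alpha> \<beta>" for \<alpha> \<beta>
      by (rule hom[rule_format, OF that])
  qed
  have "\<exists>R\<in>RR. \<exists>b\<in>underS r k. \<exists>\<theta>\<in>Field r. \<forall>\<beta>\<in>H. oless r \<theta> \<beta> \<longrightarrow> ((\<gamma>, b), (\<beta>, k0)) \<in> R"
    if \<gamma>: "\<gamma> \<in> I" for \<gamma>
  proof -
    obtain v \<theta> where v: "v \<in> V" "\<theta> \<in> Field r"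
      and stable: "\<And>\<beta>. \<beta> \<in> H \<Longrightarrow> oless r \<theta> \<beta> \<Longrightarrow> oless r \<gamma> \<beta> \<and> w \<beta> \<gamma> = v"
      using eventual \<gamma> by blast
    have "((\<gamma>, snd v), (\<beta>, k0)) \<in> fst v" if "\<beta> \<in> H" and "oless r \<theta> \<beta>" for \<beta>
      using w[OF \<gamma>] stable[OF that] H(1) that(1) by blast
    moreover have "fst v \<in> RR" "snd v \<in> underS r k" using v(1) unfolding V_def by auto
    ultimately show ?thesis using v(2) by blast
  qed
  thus ?thesis by (rule cofinal_branch_if_eventually_below[OF RR I(2) H_cofinal])
qed

end

theorem mainTheorem5:
  fixes r :: "'a rel"
  assumes "Card_order r" and "Cinfinite r" and "regularCard r"
    and "weakly_compact r"
  shows "strong_system_property r"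
proof -
  interpret regular_cardinal r using assms by unfold_locales auto
  show ?thesis
    unfolding strong_system_property_def
    using strong_system_cofinal_branch[OF assms(4)] by (intro allI impI) (elim conjE)
qed

end
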